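(* Assume: (A1) $f(x,y)$ and each component of $g(x,y)$ are convex in $y$ for each fixed $x$, and $f,g$ are twice continuously differentiable; (A2) $Y\subseteq\mathbb{R}^m$ is a compact convex set with $\{y:\exists x\in X \text{ such that } g(x,y)\le 0\}\subseteq\mathrm{int}(Y)$; (A3) $F$ and $G$ are twice continuously differentiable; (R1) for each $x\in X$ there exists $y$ with $g(x,y)<0$; (R2) $X$ is compact and nonempty, and the constraint set $\{x:G(x)\le0\}$ satisfies MFCQ at each $x\in X$. If $\epsilon>0$ and $\mu\ge0$, then the constraint set $\mathcal{C}(\epsilon,\mu)$ of $\mathsf{DBP}(\epsilon,\mu)$ satisfies MFCQ at every point of $\mathcal{C}(\epsilon,\mu)$.
   Context: Let $F:\mathbb{R}^n\times\mathbb{R}^m\to\mathbb{R}$, $f:\mathbb{R}^n\times\mathbb{R}^m\to\mathbb{R}$, $g:\mathbb{R}^n\times\mathbb{R}^m\to\mathbb{R}^p$, $G:\mathbb{R}^n\to\mathbb{R}^q$; vector inequalities componentwise; $X=\{x:G(x)\le0\}$. For $\mu\ge0$, $h_\mu(\lambda,x)=\min_y\{\mu\|y\|^2+f(x,y)+\lambda^{\mathsf T}g(x,y):y\in Y\}$ with $Y$ from (A2). $\mathcal{C}(\epsilon,\mu)$ is the set of $(x,y,\lambda)$ satisfying the constraints $G(x)\le0$, $g(x,y)-\epsilon\le0$, $-\lambda\le0$, and $f(x,y)-h_\mu(\lambda,x)-\epsilon\le0$; $\mathsf{DBP}(\epsilon,\mu)$ is: minimize $F(x,y)$ over $\mathcal{C}(\epsilon,\mu)$.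 A constraint set $\{z:c_i(z)\le0,\ i=1,\dots,r\}$ satisfies MFCQ at a feasible $\overline{z}$ if, with $I=\{i:c_i(\overline{z})=0\}$, there exists a direction $d$ such that $v_i^{\mathsf T}d<0$ for all $i\in I$ and all choices $v_i\in\partial c_i(\overline{z})$, where $\partial$ is the (limiting) subgradient of variational analysis (equal to $\{\nabla c_i(\overline{z})\}$ for continuously differentiable $c_i$). *)

theory Defs
  imports "HOL-Analysis.Analysis"
begin

definition C2 :: "('a::euclidean_space \<Rightarrow> 'b::euclidean_space) \<Rightarrow> bool" where
  "C2 \<phi> \<longleftrightarrow> (\<exists>(D :: 'a \<Rightarrow> ('a \<Rightarrow>\<^sub>L 'b)) (D2 :: 'a \<Rightarrow> ('a \<Rightarrow>\<^sub>L ('a \<Rightarrow>\<^sub>L 'b))).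
      (\<forall>z. (\<phi> has_derivative blinfun_apply (D z)) (at z)) \<and>
      (\<forall>z. (D has_derivative blinfun_apply (D2 z)) (at z)) \<and>
      continuous_on UNIV D2)"

definition frechet_subdiff :: "('a::real_inner \<Rightarrow> real) \<Rightarrow> 'a \<Rightarrow> 'a set" where
  "frechet_subdiff c z = {v. \<forall>e>0. \<exists>\<delta>>0. \<forall>w. dist w z < \<delta> \<longrightarrow>
       c w \<ge> c z + inner v (w - z) - e * norm (w - z)}"

definition limiting_subdiff :: "('a::real_inner \<Rightarrow> real) \<Rightarrow> 'a \<Rightarrow> 'a set" where
  "limiting_subdiff c z = {v. \<exists>zs vs. zs \<longlonglongrightarrow> z \<and> (\<lambda>k. c (zs k)) \<longlonglongrightarrow> c z \<and>
       (\<forall>k. vs k \<in> frechet_subdiff c (zs k)) \<and> vs \<longlonglongrightarrow> v}"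

definition MFCQ :: "('i \<Rightarrow> 'a::real_inner \<Rightarrow> real) \<Rightarrow> 'a \<Rightarrow> bool" where
  "MFCQ cs zb \<longleftrightarrow> (\<exists>d. \<forall>i. cs i zb = 0 \<longrightarrow> (\<forall>v\<in>limiting_subdiff (cs i) zb. inner v d < 0))"

definition hmu :: "real \<Rightarrow> ('n \<Rightarrow> 'm \<Rightarrow> real) \<Rightarrow> ('n \<Rightarrow> 'm \<Rightarrow> real^'p)
     \<Rightarrow> ('m::real_normed_vector) set \<Rightarrow> real^'p \<Rightarrow> 'n \<Rightarrow> real" where
  "hmu \<mu> f g Y l x = Inf ((\<lambda>y. \<mu> * (norm y)^2 + f x y + inner l (g x y)) ` Y)"

datatype ('q,'p) cidx = CG 'q | Cg 'p | Cl 'p | Cv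

fun dbp_cons :: "('n \<Rightarrow> real^'q) \<Rightarrow> ('n \<Rightarrow> 'm \<Rightarrow> real) \<Rightarrow> ('n \<Rightarrow> 'm \<Rightarrow> real^'p)
     \<Rightarrow> ('m::real_normed_vector) set \<Rightarrow> real \<Rightarrow> real
     \<Rightarrow> ('q,'p) cidx \<Rightarrow> ('n \<times> 'm \<times> (real^'p)) \<Rightarrow> real" where
  "dbp_cons G f g Y \<epsilon> \<mu> (CG j) (x,y,l) = G x $ j"
| "dbp_cons G f g Y \<epsilon> \<mu> (Cg i) (x,y,l) = g x y $ i - \<epsilon>"
| "dbp_cons G f g Y \<epsilon> \<mu> (Cl i) (x,y,l) = - (l $ i)"
| "dbp_cons G f g Y \<epsilon> \<mu> Cv (x,y,l) = f x y - hmu \<mu> f g Y l x - \<epsilon>"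

definition dbp_set :: "('n \<Rightarrow> real^'q) \<Rightarrow> ('n \<Rightarrow> 'm \<Rightarrow> real) \<Rightarrow> ('n \<Rightarrow> 'm \<Rightarrow> real^'p)
     \<Rightarrow> ('m::real_normed_vector) set \<Rightarrow> real \<Rightarrow> real \<Rightarrow> ('n \<times> 'm \<times> (real^'p)) set" where
  "dbp_set G f g Y \<epsilon> \<mu> = {z. \<forall>i. dbp_cons G f g Y \<epsilon> \<mu> i z \<le> 0}"

end

theory Submission
  imports Defs
begin

(* Fix a feasible point (x0, w0), w0 = (y0, l0). By (R2) the upper-level constraints have an
   MFCQ direction dx at x0. Slater's condition (R1) and convex duality give y and a strictly
   positive multiplier l with g(x0, y) <= 0 and f(x0, y) - h_mu(l, x0) < eps, so at (x0, y, l)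
   every constraint other than G is strictly negative. These constraints are convex in w = (y, l),
   since h_mu is an infimum of affine functions of l, and Lipschitz on compact sets; hence along
   (t dx, (y, l) - w0) with small t > 0 every active constraint decreases at a uniform rate on a
   whole neighbourhood of (x0, w0). Such uniform descent passes from Frechet to limiting
   subgradients v and forces <v, d> < 0, which is MFCQ. *)

section \<open>Uniform descent and limiting subgradients\<close>

definition uniform_descent_direction :: "('a::real_normed_vector \<Rightarrow> real) \<Rightarrow> 'a \<Rightarrow> 'a \<Rightarrow> bool" where
  "uniform_descent_direction c z d \<longleftrightarrow> (\<exists>r>0. \<exists>\<kappa>>0. \<forall>z' \<tau>.
     dist z' z < r \<longrightarrow> 0 < \<tau> \<longrightarrow> \<tau> < r \<longrightarrow> c (z' + \<tau> *\<^sub>R d) \<le> c z' - \<tau> * \<kappa>)"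

lemma frechet_subdiff_inner_le:
  fixes c :: "'a::real_inner \<Rightarrow> real"
  assumes "r > 0"
    and desc: "\<And>\<tau>. 0 < \<tau> \<Longrightarrow> \<tau> < r \<Longrightarrow> c (z + \<tau> *\<^sub>R d) \<le> c z - \<tau> * \<kappa>"
    and "v \<in> frechet_subdiff c z"
  shows "inner v d \<le> - \<kappa>"
proof (rule ccontr)
  assume "\<not> ?thesis"
  then have a: "inner v d + \<kappa> > 0" by simp
  have nd: "norm d + 1 > 0" by (simp add: add_nonneg_pos)
  define e where "e = (inner v d + \<kappa>) / (2 * (norm d + 1))"
  have "e > 0" using a nd by (simp add: e_def)
  then obtain \<delta> where "\<delta> > 0"
    and fr: "\<And>w. dist w z < \<delta> \<Longrightarrow> c z + inner v (w - z) - e * norm (w - z) \<le> c w"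
    using assms(3) unfolding frechet_subdiff_def by blast
  define \<tau> where "\<tau> = min (\<delta> / (norm d + 1)) (r / 2)"
  have \<tau>: "0 < \<tau>" "\<tau> < r" using \<open>\<delta> > 0\<close> \<open>r > 0\<close> nd by (auto simp: \<tau>_def)
  have "\<tau> * norm d \<le> \<delta> / (norm d + 1) * norm d"
    unfolding \<tau>_def by (rule mult_right_mono[OF min.cobounded1 norm_ge_zero])
  also have "\<dots> < \<delta>" using \<open>\<delta> > 0\<close> nd by (simp add: field_simps)
  finally have "c z + \<tau> * inner v d - e * (\<tau> * norm d) \<le> c (z + \<tau> *\<^sub>R d)"
    using fr[of "z + \<tau> *\<^sub>R d"] \<tau> by (simp add: dist_norm)
  with desc[OF \<tau>] have "\<tau> * (inner v d + \<kappa>) \<le> \<tau> * (e * norm d)" by (simp add: algebra_simps)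
  then have "inner v d + \<kappa> \<le> e * norm d" using \<tau> by simp
  moreover have "e * norm d < e * (2 * (norm d + 1))"
    using \<open>e > 0\<close> by (intro mult_strict_left_mono) (simp_all add: add_nonneg_pos)
  moreover have "e * (2 * (norm d + 1)) = inner v d + \<kappa>" using nd by (simp add: e_def)
  ultimately show False by simp
qed

lemma limiting_subdiff_inner_neg:
  fixes c :: "'a::real_inner \<Rightarrow> real"
  assumes "uniform_descent_direction c z d" and "v \<in> limiting_subdiff c z"
  shows "inner v d < 0"
proof -
  obtain r \<kappa> where "r > 0" "\<kappa> > 0" and desc: "\<And>z' \<tau>. dist z' z < r \<Longrightarrow> 0 < \<tau> \<Longrightarrow> \<tau> < r \<Longrightarrow>
      c (z' + \<tau> *\<^sub>R d) \<le> c z' - \<tau> * \<kappa>"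
    using assms(1) unfolding uniform_descent_direction_def by blast
  obtain zs vs where "zs \<longlonglongrightarrow> z" and fr: "\<And>k. vs k \<in> frechet_subdiff c (zs k)" and "vs \<longlonglongrightarrow> v"
    using assms(2) unfolding limiting_subdiff_def by blast
  have "\<forall>\<^sub>F k in sequentially. dist (zs k) z < r"
    using \<open>zs \<longlonglongrightarrow> z\<close> \<open>r > 0\<close> by (rule tendstoD)
  then have "\<forall>\<^sub>F k in sequentially. inner (vs k) d \<le> - \<kappa>"
    by eventually_elim (use frechet_subdiff_inner_le[OF \<open>r > 0\<close> _ fr] desc in blast)
  moreover have "(\<lambda>k. inner (vs k) d) \<longlonglongrightarrow> inner v d"
    using \<open>vs \<longlonglongrightarrow> v\<close> by (intro tendsto_intros)
  ultimately have "inner v d \<le> - \<kappa>" by (intro tendsto_upperbound) auto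
  with \<open>\<kappa> > 0\<close> show ?thesis by simp
qed

lemma has_derivative_gradient_in_limiting_subdiff:
  fixes \<phi> :: "'a::euclidean_space \<Rightarrow> real"
  assumes der: "(\<phi> has_derivative \<phi>') (at z)"
  obtains v where "v \<in> limiting_subdiff \<phi> z" and "\<And>w. \<phi>' w = inner v w"
proof
  define v where "v = adjoint \<phi>' 1"
  show rep: "\<phi>' w = inner v w" for w
    using adjoint_works[OF has_derivative_linear[OF der], of w 1]
    by (simp add: v_def inner_commute)
  have "v \<in> frechet_subdiff \<phi> z"
    unfolding frechet_subdiff_def
  proof (intro CollectI allI impI)
    fix e :: real assume "e > 0"
    then obtain \<delta> where "\<delta> > 0"
      and "\<And>w. norm (w - z) < \<delta> \<Longrightarrow> norm (\<phi> w - \<phi> z - \<phi>' (w - z)) \<le> e * norm (w - z)"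
      using der unfolding has_derivative_at_alt by blast
    moreover have "\<phi> z + inner v (w - z) - e * norm (w - z) \<le> \<phi> w"
      if "norm (\<phi> w - \<phi> z - \<phi>' (w - z)) \<le> e * norm (w - z)" for w
      using that by (simp add: rep)
    ultimately show "\<exists>\<delta>>0. \<forall>w. dist w z < \<delta> \<longrightarrow> \<phi> z + inner v (w - z) - e * norm (w - z) \<le> \<phi> w"
      by (auto simp: dist_norm)
  qed
  then show "v \<in> limiting_subdiff \<phi> z"
    unfolding limiting_subdiff_def by (intro CollectI exI[of _ "\<lambda>_. z"] exI[of _ "\<lambda>_. v"]) auto
qed

lemma uniform_descent_direction_of_derivative:
  fixes \<Phi> :: "'a::real_normed_vector \<Rightarrow> real^'q"
  assumes der: "\<And>z. (\<Phi> has_derivative blinfun_apply (D z)) (at z)"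
    and "isCont D z\<^sub>0" and neg: "D z\<^sub>0 d $ j < 0"
  shows "uniform_descent_direction (\<lambda>z. \<Phi> z $ j) z\<^sub>0 d"
proof -
  define \<kappa> where "\<kappa> = - D z\<^sub>0 d $ j / 2"
  have nd: "norm d + 1 > 0" by (simp add: add_nonneg_pos)
  define \<eta> where "\<eta> = \<kappa> / (norm d + 1)"
  have "\<kappa> > 0" using neg by (simp add: \<kappa>_def)
  then have "\<eta> > 0" using nd by (simp add: \<eta>_def)
  then obtain \<delta> where "\<delta> > 0" and near: "\<And>z. dist z z\<^sub>0 < \<delta> \<Longrightarrow> dist (D z) (D z\<^sub>0) < \<eta>"
    using \<open>isCont D z\<^sub>0\<close> unfolding continuous_at_eps_delta by blast
  have lip: "\<eta>-lipschitz_on (ball z\<^sub>0 \<delta>) (\<lambda>z. \<Phi> z - D z\<^sub>0 z)"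
  proof (rule bounded_derivative_imp_lipschitz)
    fix z assume "z \<in> ball z\<^sub>0 \<delta>"
    show "((\<lambda>z. \<Phi> z - D z\<^sub>0 z) has_derivative blinfun_apply (D z - D z\<^sub>0)) (at z within ball z\<^sub>0 \<delta>)"
      by (auto intro!: derivative_eq_intros has_derivative_at_withinI[OF der] simp: blinfun.diff_left)
    show "onorm (blinfun_apply (D z - D z\<^sub>0)) \<le> \<eta>"
      using near[of z] \<open>z \<in> ball z\<^sub>0 \<delta>\<close>
      by (simp add: norm_blinfun.rep_eq[symmetric] dist_norm norm_minus_commute)
  qed (use \<open>\<eta> > 0\<close> in auto)
  define r where "r = min (\<delta> / 2) (\<delta> / (2 * (norm d + 1)))"
  have "r > 0" using \<open>\<delta> > 0\<close> nd by (simp add: r_def)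
  have "\<Phi> (z' + \<tau> *\<^sub>R d) $ j \<le> \<Phi> z' $ j - \<tau> * \<kappa>"
    if z': "dist z' z\<^sub>0 < r" and \<tau>: "0 < \<tau>" "\<tau> < r" for z' \<tau>
  proof -
    have "\<tau> * norm d \<le> \<delta> / (2 * (norm d + 1)) * norm d"
      using \<tau> by (intro mult_right_mono) (auto simp: r_def)
    also have "\<dots> \<le> \<delta> / 2" using \<open>\<delta> > 0\<close> nd by (simp add: field_simps)
    finally have "dist (z' + \<tau> *\<^sub>R d) z\<^sub>0 < \<delta>"
      using z' \<tau> dist_triangle[of "z' + \<tau> *\<^sub>R d" z\<^sub>0 z'] by (simp add: r_def dist_norm)
    then have "norm ((\<Phi> (z' + \<tau> *\<^sub>R d) - D z\<^sub>0 (z' + \<tau> *\<^sub>R d)) - (\<Phi> z' - D z\<^sub>0 z')) \<le> \<eta> * (\<tau> * norm d)"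
      using lipschitz_on_normD[OF lip, of "z' + \<tau> *\<^sub>R d" z'] z' \<tau>
      by (simp add: r_def dist_commute)
    then have "\<Phi> (z' + \<tau> *\<^sub>R d) $ j - \<Phi> z' $ j - \<tau> * D z\<^sub>0 d $ j \<le> \<eta> * (\<tau> * norm d)"
      using component_le_norm_cart[of "(\<Phi> (z' + \<tau> *\<^sub>R d) - D z\<^sub>0 (z' + \<tau> *\<^sub>R d)) - (\<Phi> z' - D z\<^sub>0 z')" j]
      by (simp add: blinfun.add_right blinfun.scaleR_right)
    moreover have "\<eta> * (\<tau> * norm d) \<le> \<tau> * \<kappa>"
      using \<tau> \<open>\<kappa> > 0\<close> nd by (simp add: \<eta>_def field_simps mult_left_mono)
    ultimately show ?thesis by (simp add: \<kappa>_def algebra_simps)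
  qed
  with \<open>r > 0\<close> \<open>\<kappa> > 0\<close> show ?thesis unfolding uniform_descent_direction_def by blast
qed

lemma uniform_descent_direction_fst:
  assumes "uniform_descent_direction \<phi> x\<^sub>0 dx"
  shows "uniform_descent_direction (\<lambda>z. \<phi> (fst z)) (x\<^sub>0, w\<^sub>0) (dx, dw)"
proof -
  obtain r \<kappa> where "r > 0" "\<kappa> > 0" and desc: "\<And>x' \<tau>. dist x' x\<^sub>0 < r \<Longrightarrow> 0 < \<tau> \<Longrightarrow> \<tau> < r \<Longrightarrow>
      \<phi> (x' + \<tau> *\<^sub>R dx) \<le> \<phi> x' - \<tau> * \<kappa>"
    using assms unfolding uniform_descent_direction_def by blast
  have "\<phi> (fst (z' + \<tau> *\<^sub>R (dx, dw))) \<le> \<phi> (fst z') - \<tau> * \<kappa>"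
    if "dist z' (x\<^sub>0, w\<^sub>0) < r" "0 < \<tau>" "\<tau> < r" for z' \<tau>
    using desc[of "fst z'" \<tau>] dist_fst_le[of z' "(x\<^sub>0, w\<^sub>0)"] that by simp
  with \<open>r > 0\<close> \<open>\<kappa> > 0\<close> show ?thesis unfolding uniform_descent_direction_def by blast
qed

section \<open>Lipschitz continuity on compact sets\<close>

definition lipschitz_on_compacts :: "('a::metric_space \<Rightarrow> 'b::metric_space) \<Rightarrow> bool" where
  "lipschitz_on_compacts \<phi> \<longleftrightarrow> (\<forall>K. compact K \<longrightarrow> (\<exists>L. L-lipschitz_on K \<phi>))"

lemma lipschitz_on_compactsI:
  assumes "\<And>K. compact K \<Longrightarrow> \<exists>L. L-lipschitz_on K \<phi>"
  shows "lipschitz_on_compacts \<phi>"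
  using assms unfolding lipschitz_on_compacts_def by blast

lemma lipschitz_on_compactsD:
  assumes "lipschitz_on_compacts \<phi>" and "compact K"
  obtains L where "L-lipschitz_on K \<phi>"
  using assms unfolding lipschitz_on_compacts_def by blast

lemma lipschitz_on_compacts_imp_continuous_on:
  fixes \<phi> :: "'a::heine_borel \<Rightarrow> 'b::metric_space"
  assumes "lipschitz_on_compacts \<phi>"
  shows "continuous_on S \<phi>"
proof -
  have "isCont \<phi> z" for z
  proof -
    obtain L where "L-lipschitz_on (cball z 1) \<phi>"
      using assms compact_cball by (rule lipschitz_on_compactsD)
    then have "continuous_on (ball z 1) \<phi>"
      by (meson ball_subset_cball continuous_on_subset lipschitz_on_continuous_on)
    then show ?thesis by (simp add: continuous_on_eq_continuous_at)
  qed
  then show ?thesis by (simp add: continuous_at_imp_continuous_on)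
qed

lemma lipschitz_on_compacts_compose:
  fixes \<phi> :: "'a::metric_space \<Rightarrow> 'b::metric_space" and \<psi> :: "'b \<Rightarrow> 'c::metric_space"
  assumes "lipschitz_on_compacts \<psi>" and "lipschitz_on_compacts \<phi>"
  shows "lipschitz_on_compacts (\<lambda>z. \<psi> (\<phi> z))"
  unfolding lipschitz_on_compacts_def
proof (intro allI impI)
  fix K :: "'a set" assume "compact K"
  with assms(2) obtain L where L: "L-lipschitz_on K \<phi>" by (rule lipschitz_on_compactsD)
  have "compact (\<phi> ` K)"
    using compact_continuous_image[OF lipschitz_on_continuous_on[OF L] \<open>compact K\<close>] .
  with assms(1) obtain M where "M-lipschitz_on (\<phi> ` K) \<psi>" by (rule lipschitz_on_compactsD)
  then show "\<exists>L. L-lipschitz_on K (\<lambda>z. \<psi> (\<phi> z))" using lipschitz_on_compose2[OF L] by blast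
qed

lemma lipschitz_on_compacts_ident: "lipschitz_on_compacts (\<lambda>z. z)"
  unfolding lipschitz_on_compacts_def using lipschitz_on_id by blast

lemma lipschitz_on_compacts_const: "lipschitz_on_compacts (\<lambda>z. c)"
  unfolding lipschitz_on_compacts_def using lipschitz_on_constant by blast

lemma nonexpansive_lipschitz_on_compacts:
  assumes "\<And>x y. dist (h x) (h y) \<le> dist x y"
  shows "lipschitz_on_compacts h"
proof (rule lipschitz_on_compactsI)
  fix K show "\<exists>L. L-lipschitz_on K h" using assms by (intro exI[of _ 1] lipschitz_onI) auto
qed

lemma lipschitz_on_compacts_fst: "lipschitz_on_compacts \<phi> \<Longrightarrow> lipschitz_on_compacts (\<lambda>z. fst (\<phi> z))"
  by (rule lipschitz_on_compacts_compose[OF nonexpansive_lipschitz_on_compacts[OF dist_fst_le]])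

lemma lipschitz_on_compacts_snd: "lipschitz_on_compacts \<phi> \<Longrightarrow> lipschitz_on_compacts (\<lambda>z. snd (\<phi> z))"
  by (rule lipschitz_on_compacts_compose[OF nonexpansive_lipschitz_on_compacts[OF dist_snd_le]])

lemma lipschitz_on_compacts_vec_nth:
  "lipschitz_on_compacts \<phi> \<Longrightarrow> lipschitz_on_compacts (\<lambda>z. \<phi> z $ j)"
  by (rule lipschitz_on_compacts_compose[OF nonexpansive_lipschitz_on_compacts[OF dist_vec_nth_le]])

lemma lipschitz_on_compacts_Pair:
  fixes \<phi> :: "'a::metric_space \<Rightarrow> 'b::metric_space" and \<psi> :: "'a \<Rightarrow> 'c::metric_space"
  assumes "lipschitz_on_compacts \<phi>" and "lipschitz_on_compacts \<psi>"
  shows "lipschitz_on_compacts (\<lambda>z. (\<phi> z, \<psi> z))"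
proof (rule lipschitz_on_compactsI)
  fix K :: "'a set" assume "compact K"
  with assms obtain L M where "L-lipschitz_on K \<phi>" "M-lipschitz_on K \<psi>"
    by (meson lipschitz_on_compactsD)
  then show "\<exists>L. L-lipschitz_on K (\<lambda>z. (\<phi> z, \<psi> z))" by (blast intro: lipschitz_on_Pair)
qed

lemma lipschitz_on_compacts_case_prod:
  assumes "lipschitz_on_compacts (\<lambda>(x, y). h x y)" "lipschitz_on_compacts \<phi>" "lipschitz_on_compacts \<psi>"
  shows "lipschitz_on_compacts (\<lambda>z. h (\<phi> z) (\<psi> z))"
  using lipschitz_on_compacts_compose[OF assms(1) lipschitz_on_compacts_Pair[OF assms(2,3)]] by simp

lemma lipschitz_on_compacts_add:
  fixes \<phi> \<psi> :: "'a::metric_space \<Rightarrow> 'b::real_normed_vector"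
  assumes "lipschitz_on_compacts \<phi>" and "lipschitz_on_compacts \<psi>"
  shows "lipschitz_on_compacts (\<lambda>z. \<phi> z + \<psi> z)"
proof (rule lipschitz_on_compactsI)
  fix K :: "'a set" assume "compact K"
  with assms obtain L M where "L-lipschitz_on K \<phi>" "M-lipschitz_on K \<psi>"
    by (meson lipschitz_on_compactsD)
  then show "\<exists>L. L-lipschitz_on K (\<lambda>z. \<phi> z + \<psi> z)" by (blast intro: lipschitz_on_add)
qed

lemma lipschitz_on_compacts_minus:
  fixes \<phi> :: "'a::metric_space \<Rightarrow> 'b::real_normed_vector"
  shows "lipschitz_on_compacts \<phi> \<Longrightarrow> lipschitz_on_compacts (\<lambda>z. - \<phi> z)"
  unfolding lipschitz_on_compacts_def by simp

lemma lipschitz_on_compacts_diff: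
  fixes \<phi> \<psi> :: "'a::metric_space \<Rightarrow> 'b::real_normed_vector"
  assumes "lipschitz_on_compacts \<phi>" and "lipschitz_on_compacts \<psi>"
  shows "lipschitz_on_compacts (\<lambda>z. \<phi> z - \<psi> z)"
  using lipschitz_on_compacts_add[OF assms(1) lipschitz_on_compacts_minus[OF assms(2)]] by simp

lemma lipschitz_on_compacts_bilinear:
  fixes \<phi> :: "'a::metric_space \<Rightarrow> 'b::real_normed_vector" and \<psi> :: "'a \<Rightarrow> 'c::real_normed_vector"
  assumes bil: "bounded_bilinear m"
    and "lipschitz_on_compacts \<phi>" and "lipschitz_on_compacts \<psi>"
  shows "lipschitz_on_compacts (\<lambda>z. m (\<phi> z) (\<psi> z))"
  unfolding lipschitz_on_compacts_def
proof (intro allI impI)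
  fix K :: "'a set" assume "compact K"
  obtain L\<^sub>\<phi> L\<^sub>\<psi> where L: "L\<^sub>\<phi>-lipschitz_on K \<phi>" "L\<^sub>\<psi>-lipschitz_on K \<psi>"
    using assms(2,3) \<open>compact K\<close> by (meson lipschitz_on_compactsD)
  have "bounded (\<phi> ` K)" "bounded (\<psi> ` K)"
    using L \<open>compact K\<close> by (meson compact_continuous_image compact_imp_bounded lipschitz_on_continuous_on)+
  then obtain A B where "A > 0" "B > 0"
    and A: "\<And>z. z \<in> K \<Longrightarrow> norm (\<phi> z) \<le> A" and B: "\<And>z. z \<in> K \<Longrightarrow> norm (\<psi> z) \<le> B"
    unfolding bounded_pos by blast
  obtain C where "C \<ge> 0" and C: "\<And>u v. norm (m u v) \<le> norm u * norm v * C"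
    using bounded_bilinear.nonneg_bounded[OF bil] by blast
  have "((L\<^sub>\<phi> * B + A * L\<^sub>\<psi>) * C)-lipschitz_on K (\<lambda>z. m (\<phi> z) (\<psi> z))"
  proof (rule lipschitz_onI)
    fix x y assume xy: "x \<in> K" "y \<in> K"
    have "dist (m (\<phi> x) (\<psi> x)) (m (\<phi> y) (\<psi> y))
        = norm (m (\<phi> x - \<phi> y) (\<psi> x) + m (\<phi> y) (\<psi> x - \<psi> y))"
      by (simp add: dist_norm bounded_bilinear.diff_left[OF bil] bounded_bilinear.diff_right[OF bil])
    also have "\<dots> \<le> norm (\<phi> x - \<phi> y) * norm (\<psi> x) * C + norm (\<phi> y) * norm (\<psi> x - \<psi> y) * C"
      by (rule norm_triangle_le[OF add_mono[OF C C]])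
    also have "\<dots> \<le> (L\<^sub>\<phi> * dist x y) * B * C + A * (L\<^sub>\<psi> * dist x y) * C"
      using lipschitz_onD[OF L(1) xy] lipschitz_onD[OF L(2) xy] A[OF xy(2)] B[OF xy(1)]
        lipschitz_on_nonneg[OF L(1)] \<open>C \<ge> 0\<close> \<open>A > 0\<close>
      by (intro add_mono mult_right_mono mult_mono) (auto simp: dist_norm)
    also have "\<dots> = (L\<^sub>\<phi> * B + A * L\<^sub>\<psi>) * C * dist x y" by (simp add: algebra_simps)
    finally show "dist (m (\<phi> x) (\<psi> x)) (m (\<phi> y) (\<psi> y)) \<le> (L\<^sub>\<phi> * B + A * L\<^sub>\<psi>) * C * dist x y" .
  qed (use \<open>C \<ge> 0\<close> \<open>A > 0\<close> \<open>B > 0\<close> lipschitz_on_nonneg[OF L(1)] lipschitz_on_nonneg[OF L(2)] in simp)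
  then show "\<exists>L. L-lipschitz_on K (\<lambda>z. m (\<phi> z) (\<psi> z))" by blast
qed

lemma C2_imp_continuous_derivative:
  assumes "C2 \<phi>"
  obtains D where "\<And>z. (\<phi> has_derivative blinfun_apply (D z)) (at z)" and "continuous_on UNIV D"
proof -
  obtain D D2 where "\<forall>z. (\<phi> has_derivative blinfun_apply (D z)) (at z)"
    and "\<forall>z. (D has_derivative blinfun_apply (D2 z)) (at z)"
    using assms unfolding C2_def by blast
  moreover from this(2) have "continuous_on UNIV D"
    by (intro continuous_at_imp_continuous_on ballI has_derivative_continuous) blast
  ultimately show ?thesis using that by blast
qed

lemma C2_lipschitz_on_compacts:
  fixes \<phi> :: "'a::euclidean_space \<Rightarrow> 'b::euclidean_space"
  assumes "C2 \<phi>"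
  shows "lipschitz_on_compacts \<phi>"
  unfolding lipschitz_on_compacts_def
proof (intro allI impI)
  fix K :: "'a set" assume "compact K"
  obtain D where der: "\<And>z. (\<phi> has_derivative blinfun_apply (D z)) (at z)" and "continuous_on UNIV D"
    using C2_imp_continuous_derivative[OF assms] by blast
  obtain R z\<^sub>0 where "K \<subseteq> cball z\<^sub>0 R"
    using compact_imp_bounded[OF \<open>compact K\<close>] by (auto simp: bounded_subset_cball)
  have "bounded (D ` cball z\<^sub>0 R)"
    by (intro compact_imp_bounded compact_continuous_image continuous_on_subset[OF \<open>continuous_on UNIV D\<close>]) auto
  then obtain B where "B > 0" and B: "\<And>z. z \<in> cball z\<^sub>0 R \<Longrightarrow> norm (D z) \<le> B"
    unfolding bounded_pos by blast
  have "B-lipschitz_on (cball z\<^sub>0 R) \<phi>"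
    by (rule bounded_derivative_imp_lipschitz[OF has_derivative_at_withinI[OF der] convex_cball])
      (use B \<open>B > 0\<close> in \<open>auto simp: norm_blinfun.rep_eq[symmetric]\<close>)
  then show "\<exists>L. L-lipschitz_on K \<phi>" using lipschitz_on_subset \<open>K \<subseteq> cball z\<^sub>0 R\<close> by blast
qed

lemma lipschitz_on_compacts_Inf:
  fixes \<Phi> :: "'a::metric_space \<times> 'b::metric_space \<Rightarrow> real"
  assumes lip: "lipschitz_on_compacts \<Phi>" and "compact Y" and "Y \<noteq> {}"
  shows "lipschitz_on_compacts (\<lambda>p. Inf ((\<lambda>y. \<Phi> (p, y)) ` Y))"
proof (rule lipschitz_on_compactsI)
  fix K :: "'a set" assume "compact K"
  then have "compact (K \<times> Y)" using \<open>compact Y\<close> by (rule compact_Times)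
  with lip obtain L where L: "L-lipschitz_on (K \<times> Y) \<Phi>" by (rule lipschitz_on_compactsD)
  define I where "I = (\<lambda>p. Inf ((\<lambda>y. \<Phi> (p, y)) ` Y))"
  have bdd: "bdd_below ((\<lambda>y. \<Phi> (p, y)) ` Y)" if "p \<in> K" for p
  proof -
    have "continuous_on Y (\<lambda>y. \<Phi> (p, y))"
      by (rule continuous_on_compose2[OF lipschitz_on_continuous_on[OF L]])
        (auto intro!: continuous_intros simp: that)
    then show ?thesis
      by (intro bounded_imp_bdd_below compact_imp_bounded compact_continuous_image \<open>compact Y\<close>)
  qed
  have le: "I p \<le> I q + L * dist p q" if "p \<in> K" "q \<in> K" for p q
  proof -
    have "I p - L * dist p q \<le> \<Phi> (q, y)" if "y \<in> Y" for y
    proof -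
      have "I p \<le> \<Phi> (p, y)"
        using bdd[OF \<open>p \<in> K\<close>] \<open>y \<in> Y\<close> by (simp add: I_def cInf_lower)
      moreover have "dist (\<Phi> (p, y)) (\<Phi> (q, y)) \<le> L * dist p q"
        using lipschitz_onD[OF L, of "(p, y)" "(q, y)"] \<open>p \<in> K\<close> \<open>q \<in> K\<close> \<open>y \<in> Y\<close>
        by (simp add: dist_Pair_Pair)
      ultimately show ?thesis by (simp add: dist_real_def)
    qed
    then have "I p - L * dist p q \<le> I q"
      using \<open>Y \<noteq> {}\<close> unfolding I_def by (intro cInf_greatest) auto
    then show ?thesis by simp
  qed
  have "L-lipschitz_on K I"
  proof (rule lipschitz_onI)
    fix p q assume "p \<in> K" "q \<in> K"
    then have "I p \<le> I q + L * dist p q" "I q \<le> I p + L * dist p q"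
      using le[OF \<open>p \<in> K\<close> \<open>q \<in> K\<close>] le[OF \<open>q \<in> K\<close> \<open>p \<in> K\<close>] by (simp_all add: dist_commute)
    then show "dist (I p) (I q) \<le> L * dist p q"
      unfolding dist_real_def by (intro abs_leI) linarith+
  qed (rule lipschitz_on_nonneg[OF L])
  then show "\<exists>L. L-lipschitz_on K (\<lambda>p. Inf ((\<lambda>y. \<Phi> (p, y)) ` Y))" unfolding I_def by blast
qed

section \<open>Convexity and descent\<close>

lemma convex_on_compose_linear:
  assumes "convex_on UNIV f" and "linear h"
  shows "convex_on UNIV (\<lambda>x. f (h x))"
  using assms by (simp add: convex_on_def linear_add linear_scale)

lemma concave_on_compose_linear:
  "concave_on UNIV f \<Longrightarrow> linear h \<Longrightarrow> concave_on UNIV (\<lambda>x. f (h x))"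
  unfolding concave_on_def by (rule convex_on_compose_linear)

lemma concave_on_Inf_image:
  assumes "Y \<noteq> {}" and conc: "\<And>y. y \<in> Y \<Longrightarrow> concave_on S (\<lambda>l. \<phi> l y)"
    and bdd: "\<And>l. l \<in> S \<Longrightarrow> bdd_below (\<phi> l ` Y)"
  shows "concave_on S (\<lambda>l. Inf (\<phi> l ` Y))"
proof -
  have "convex S" using \<open>Y \<noteq> {}\<close> conc concave_on_imp_convex by blast
  moreover have "u * Inf (\<phi> a ` Y) + v * Inf (\<phi> b ` Y) \<le> Inf (\<phi> (u *\<^sub>R a + v *\<^sub>R b) ` Y)"
    if "a \<in> S" "b \<in> S" "u \<ge> 0" "v \<ge> 0" "u + v = 1" for a b u v
  proof (rule cInf_greatest)
    fix t assume "t \<in> \<phi> (u *\<^sub>R a + v *\<^sub>R b) ` Y"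
    then obtain y where "y \<in> Y" and t: "t = \<phi> (u *\<^sub>R a + v *\<^sub>R b) y" by blast
    have "u * Inf (\<phi> a ` Y) + v * Inf (\<phi> b ` Y) \<le> u * \<phi> a y + v * \<phi> b y"
      using that bdd \<open>y \<in> Y\<close> by (intro add_mono mult_left_mono cInf_lower) auto
    also have "\<dots> \<le> t"
      using conc[OF \<open>y \<in> Y\<close>] that unfolding t concave_on_iff by blast
    finally show "u * Inf (\<phi> a ` Y) + v * Inf (\<phi> b ` Y) \<le> t" .
  qed (use \<open>Y \<noteq> {}\<close> in simp)
  ultimately show ?thesis unfolding concave_on_iff by blast
qed

lemma add_mem_cball:
  fixes z :: "'a::real_normed_vector"
  assumes "dist z z\<^sub>0 \<le> s" and "norm v \<le> R - s"
  shows "z + v \<in> cball z\<^sub>0 R"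
  using dist_triangle[of z\<^sub>0 "z + v" z] assms by (simp add: dist_commute dist_norm)

lemma convex_in_snd_step_le:
  fixes c :: "'a::real_normed_vector \<times> 'b::real_normed_vector \<Rightarrow> real"
  assumes conv: "convex_on UNIV (\<lambda>w. c (x, w))" and lip: "L-lipschitz_on S c"
    and S: "(x + a, w + \<tau> *\<^sub>R dw) \<in> S" "(x, w + \<tau> *\<^sub>R dw) \<in> S" and \<tau>: "0 \<le> \<tau>" "\<tau> \<le> 1"
  shows "c (x + a, w + \<tau> *\<^sub>R dw) \<le> c (x, w) + L * norm a + \<tau> * (c (x, w + dw) - c (x, w))"
proof -
  have "dist (c (x + a, w + \<tau> *\<^sub>R dw)) (c (x, w + \<tau> *\<^sub>R dw)) \<le> L * norm a"
    using lipschitz_onD[OF lip S] by (simp add: dist_Pair_Pair dist_norm)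
  then have "c (x + a, w + \<tau> *\<^sub>R dw) - c (x, w + \<tau> *\<^sub>R dw) \<le> L * norm a"
    by (simp add: dist_real_def)
  moreover have "(1 - \<tau>) *\<^sub>R w + \<tau> *\<^sub>R (w + dw) = w + \<tau> *\<^sub>R dw" by (simp add: algebra_simps)
  then have "c (x, w + \<tau> *\<^sub>R dw) \<le> c (x, w) + \<tau> * (c (x, w + dw) - c (x, w))"
    using convex_onD[OF conv, of \<tau> w "w + dw"] \<tau> by (simp add: algebra_simps)
  ultimately show ?thesis by linarith
qed

text \<open>Convexity in w gives the decrease along dw; t is taken so small that the Lipschitz cost
  of the step t dx in the first block cannot cancel it.\<close>
lemma convex_eventually_uniform_descent_direction:
  fixes c :: "'a::euclidean_space \<times> 'b::euclidean_space \<Rightarrow> real"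
  assumes conv: "\<And>x. convex_on UNIV (\<lambda>w. c (x, w))" and lip: "lipschitz_on_compacts c"
    and decr: "c (x\<^sub>0, w\<^sub>0 + dw) < c (x\<^sub>0, w\<^sub>0)"
  shows "\<forall>\<^sub>F t in at_right 0. uniform_descent_direction c (x\<^sub>0, w\<^sub>0) (t *\<^sub>R dx, dw)"
proof -
  define m where "m = c (x\<^sub>0, w\<^sub>0) - c (x\<^sub>0, w\<^sub>0 + dw)"
  have "m > 0" using decr by (simp add: m_def)
  define \<Psi> where "\<Psi> z = c (fst z, snd z + dw) - c z" for z
  have "continuous_on UNIV c" using lip by (rule lipschitz_on_compacts_imp_continuous_on)
  then have "continuous_on UNIV \<Psi>"
    unfolding \<Psi>_def by (intro continuous_on_diff continuous_on_compose2[OF \<open>continuous_on UNIV c\<close>]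
        continuous_intros) auto
  then have "isCont \<Psi> (x\<^sub>0, w\<^sub>0)" by (simp add: continuous_on_eq_continuous_at)
  then obtain \<delta> where "\<delta> > 0" and \<delta>: "\<And>z. dist z (x\<^sub>0, w\<^sub>0) < \<delta> \<Longrightarrow> dist (\<Psi> z) (\<Psi> (x\<^sub>0, w\<^sub>0)) < m / 2"
    using \<open>m > 0\<close> unfolding continuous_at_eps_delta by (metis half_gt_zero)
  have near: "\<Psi> z < - m / 2" if "dist z (x\<^sub>0, w\<^sub>0) < \<delta>" for z
  proof -
    have "\<Psi> (x\<^sub>0, w\<^sub>0) = - m" by (simp add: \<Psi>_def m_def)
    then have "\<bar>\<Psi> z + m\<bar> < m / 2" using \<delta>[OF that] by (simp add: dist_real_def)
    then show ?thesis unfolding abs_less_iff by linarith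
  qed
  define R where "R = norm dx + norm dw + 1"
  obtain L where L: "L-lipschitz_on (cball (x\<^sub>0, w\<^sub>0) R) c"
    using lip compact_cball by (rule lipschitz_on_compactsD)
  have "L \<ge> 0" using L by (rule lipschitz_on_nonneg)
  define P where "P = (L + 1) * (norm dx + 1)"
  have "P > 0" using \<open>L \<ge> 0\<close> by (simp add: P_def add_nonneg_pos)
  define T where "T = min 1 (m / (4 * P))"
  have "T > 0" using \<open>m > 0\<close> \<open>P > 0\<close> by (simp add: T_def)
  have "uniform_descent_direction c (x\<^sub>0, w\<^sub>0) (t *\<^sub>R dx, dw)" if t: "0 < t" "t < T" for t
  proof -
    have "L * (t * norm dx) \<le> (L + 1) * ((norm dx + 1) * t)"
      by (rule mult_mono) (use t \<open>L \<ge> 0\<close> in \<open>auto simp: algebra_simps\<close>)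
    also have "\<dots> = P * t" by (simp add: P_def)
    also have "\<dots> \<le> m / 4" using t \<open>P > 0\<close> by (simp add: T_def field_simps)
    finally have cost: "L * (t * norm dx) \<le> m / 4" .
    have desc: "c (z' + \<tau> *\<^sub>R (t *\<^sub>R dx, dw)) \<le> c z' - \<tau> * (m / 4)"
      if z': "dist z' (x\<^sub>0, w\<^sub>0) < min 1 \<delta>" and \<tau>: "0 < \<tau>" "\<tau> < min 1 \<delta>" for z' \<tau>
    proof -
      obtain x w where z'_def: "z' = (x, w)" by fastforce
      have "\<tau> * t \<le> 1" using \<tau> t \<open>T > 0\<close> by (intro mult_le_one) (auto simp: T_def)
      then have "norm (\<tau> *\<^sub>R t *\<^sub>R dx) \<le> norm dx" "norm (\<tau> *\<^sub>R dw) \<le> norm dw"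
        using \<tau> t by (auto simp: mult_left_le_one_le mult.assoc[symmetric])
      moreover have "norm ((0::'a), \<tau> *\<^sub>R dw) = norm (\<tau> *\<^sub>R dw)" by (simp add: norm_Pair)
      ultimately have "norm (\<tau> *\<^sub>R t *\<^sub>R dx, \<tau> *\<^sub>R dw) \<le> R - 1" "norm ((0::'a), \<tau> *\<^sub>R dw) \<le> R - 1"
        using norm_Pair_le[of "\<tau> *\<^sub>R t *\<^sub>R dx" "\<tau> *\<^sub>R dw"] norm_ge_zero[of dx]
        unfolding R_def by linarith+
      then have "z' + (\<tau> *\<^sub>R t *\<^sub>R dx, \<tau> *\<^sub>R dw) \<in> cball (x\<^sub>0, w\<^sub>0) R"
          "z' + (0, \<tau> *\<^sub>R dw) \<in> cball (x\<^sub>0, w\<^sub>0) R"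
        using add_mem_cball[of z' "(x\<^sub>0, w\<^sub>0)" 1] z' by auto
      then have "(x + \<tau> *\<^sub>R t *\<^sub>R dx, w + \<tau> *\<^sub>R dw) \<in> cball (x\<^sub>0, w\<^sub>0) R"
          "(x, w + \<tau> *\<^sub>R dw) \<in> cball (x\<^sub>0, w\<^sub>0) R"
        by (simp_all add: z'_def)
      from convex_in_snd_step_le[OF conv L this] \<tau>
      have "c (z' + \<tau> *\<^sub>R (t *\<^sub>R dx, dw)) \<le> c z' + \<tau> * (L * (t * norm dx)) + \<tau> * \<Psi> z'"
        using t by (simp add: z'_def \<Psi>_def algebra_simps)
      also have "\<dots> \<le> c z' + \<tau> * (m / 4) + \<tau> * (- m / 2)"
        using cost near[of z'] z' \<tau> by (intro add_mono mult_left_mono) auto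
      finally show ?thesis by simp
    qed
    show ?thesis
      unfolding uniform_descent_direction_def
      by (intro exI[of _ "min 1 \<delta>"] exI[of _ "m / 4"] conjI allI impI desc)
        (use \<open>m > 0\<close> \<open>\<delta> > 0\<close> in auto)
  qed
  then show ?thesis unfolding eventually_at_right_field using \<open>T > 0\<close> by blast
qed

section \<open>Lagrange multipliers under Slater's condition\<close>

lemma convex_constraint_epigraph:
  fixes \<phi> :: "'a::real_vector \<Rightarrow> real" and \<gamma> :: "'a \<Rightarrow> real^'p"
  assumes "convex Y" and "convex_on Y \<phi>" and "\<And>i. convex_on Y (\<lambda>y. \<gamma> y $ i)"
  shows "convex {(u, t). \<exists>y\<in>Y. (\<forall>i. \<gamma> y $ i \<le> u $ i) \<and> \<phi> y \<le> t}"
proof (rule convexI)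
  fix p q :: "(real^'p) \<times> real" and a b :: real
  assume "p \<in> {(u, t). \<exists>y\<in>Y. (\<forall>i. \<gamma> y $ i \<le> u $ i) \<and> \<phi> y \<le> t}"
    and "q \<in> {(u, t). \<exists>y\<in>Y. (\<forall>i. \<gamma> y $ i \<le> u $ i) \<and> \<phi> y \<le> t}"
    and ab: "0 \<le> a" "0 \<le> b" "a + b = 1"
  then obtain y\<^sub>1 y\<^sub>2 where y: "y\<^sub>1 \<in> Y" "\<forall>i. \<gamma> y\<^sub>1 $ i \<le> fst p $ i" "\<phi> y\<^sub>1 \<le> snd p"
      "y\<^sub>2 \<in> Y" "\<forall>i. \<gamma> y\<^sub>2 $ i \<le> fst q $ i" "\<phi> y\<^sub>2 \<le> snd q"
    by auto
  define y where "y = a *\<^sub>R y\<^sub>1 + b *\<^sub>R y\<^sub>2"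
  have "y \<in> Y" using \<open>convex Y\<close> y ab by (simp add: y_def convexD)
  have "\<gamma> y $ i \<le> (a *\<^sub>R fst p + b *\<^sub>R fst q) $ i" for i
  proof -
    have "\<gamma> y $ i \<le> a * \<gamma> y\<^sub>1 $ i + b * \<gamma> y\<^sub>2 $ i"
      using assms(3)[of i] y ab unfolding convex_on_def y_def by blast
    also have "\<dots> \<le> (a *\<^sub>R fst p + b *\<^sub>R fst q) $ i"
      using y ab by (simp add: add_mono mult_left_mono)
    finally show ?thesis .
  qed
  moreover have "\<phi> y \<le> a * snd p + b * snd q"
  proof -
    have "\<phi> y \<le> a * \<phi> y\<^sub>1 + b * \<phi> y\<^sub>2"
      using assms(2) y ab unfolding convex_on_def y_def by blast
    also have "\<dots> \<le> a * snd p + b * snd q" using y ab by (simp add: add_mono mult_left_mono)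
    finally show ?thesis .
  qed
  ultimately show "a *\<^sub>R p + b *\<^sub>R q \<in> {(u, t). \<exists>y\<in>Y. (\<forall>i. \<gamma> y $ i \<le> u $ i) \<and> \<phi> y \<le> t}"
    using \<open>y \<in> Y\<close> by (auto simp: case_prod_beta)
qed

lemma nonneg_if_affine_nonneg:
  fixes a b :: real
  assumes "\<And>M. M \<ge> 0 \<Longrightarrow> 0 \<le> b + a * M"
  shows "a \<ge> 0"
proof (rule ccontr)
  assume "\<not> a \<ge> 0"
  then have "a < 0" by simp
  define M where "M = (\<bar>b\<bar> + 1) / - a"
  have "M \<ge> 0" and "a * M = - (\<bar>b\<bar> + 1)" using \<open>a < 0\<close> by (simp_all add: M_def divide_nonneg_neg)
  with assms[of M] show False by linarith
qed

lemma inner_neg_if_nonneg_nonzero: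
  fixes a v :: "real^'p"
  assumes "\<forall>i. 0 \<le> a $ i" and "\<forall>i. v $ i < 0" and "a \<noteq> 0"
  shows "inner a v < 0"
proof -
  obtain i where "a $ i \<noteq> 0" using \<open>a \<noteq> 0\<close> by (auto simp: vec_eq_iff)
  then have "a $ i * v $ i < 0" using assms(1,2) by (simp add: mult_pos_neg order_le_neq_trans)
  moreover have "(\<Sum>j\<in>UNIV - {i}. a $ j * v $ j) \<le> 0"
    using assms(1,2) by (intro sum_nonpos) (simp add: mult_nonneg_nonpos less_imp_le)
  moreover have "inner a v = a $ i * v $ i + (\<Sum>j\<in>UNIV - {i}. a $ j * v $ j)"
    by (simp add: inner_vec_def sum.remove)
  ultimately show ?thesis by linarith
qed

lemma slater_multiplier:
  fixes \<phi> :: "'a::real_vector \<Rightarrow> real" and \<gamma> :: "'a \<Rightarrow> real^'p"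
  assumes "convex Y" and "convex_on Y \<phi>" and "\<And>i. convex_on Y (\<lambda>y. \<gamma> y $ i)"
    and slater: "y\<^sub>0 \<in> Y" "\<And>i. \<gamma> y\<^sub>0 $ i < 0"
    and below: "\<And>y. y \<in> Y \<Longrightarrow> \<forall>i. \<gamma> y $ i \<le> 0 \<Longrightarrow> c < \<phi> y"
  shows "\<exists>l. (\<forall>i. 0 \<le> l $ i) \<and> (\<forall>y\<in>Y. c \<le> \<phi> y + inner l (\<gamma> y))"
proof -
  define A where "A = {(u, t). \<exists>y\<in>Y. (\<forall>i. \<gamma> y $ i \<le> u $ i) \<and> \<phi> y - c \<le> t}"
  have "convex A"
    unfolding A_def using assms(1-3)
    by (intro convex_constraint_epigraph convex_on_diff) (auto simp: concave_on_const)
  moreover have "0 \<notin> A" using below unfolding A_def zero_prod_def by fastforce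
  ultimately obtain a where "a \<noteq> 0" and sep: "\<forall>x\<in>A. 0 \<le> inner a x"
    using separating_hyperplane_set_0 by blast
  obtain a\<^sub>u a\<^sub>t where a: "a = (a\<^sub>u, a\<^sub>t)" by fastforce
  have slack: "0 \<le> inner a\<^sub>u (\<gamma> y + u) + a\<^sub>t * (\<phi> y - c + t)"
    if "y \<in> Y" "\<forall>i. 0 \<le> u $ i" "0 \<le> t" for y u t
  proof -
    have "(\<gamma> y + u, \<phi> y - c + t) \<in> A"
      unfolding A_def using that by (auto intro!: bexI[of _ y])
    with sep show ?thesis by (auto simp: a inner_real_def)
  qed
  have "0 \<le> a\<^sub>t"
  proof (rule nonneg_if_affine_nonneg)
    fix M :: real assume "M \<ge> 0"
    then show "0 \<le> inner a\<^sub>u (\<gamma> y\<^sub>0) + a\<^sub>t * (\<phi> y\<^sub>0 - c) + a\<^sub>t * M"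
      using slack[of y\<^sub>0 0 M] slater by (simp add: algebra_simps)
  qed
  have a\<^sub>u: "0 \<le> a\<^sub>u $ i" for i
  proof (rule nonneg_if_affine_nonneg)
    fix M :: real assume "M \<ge> 0"
    then have "\<forall>j. 0 \<le> axis i M $ j" by (simp add: axis_def)
    from slack[OF slater(1) this order_refl]
    show "0 \<le> inner a\<^sub>u (\<gamma> y\<^sub>0) + a\<^sub>t * (\<phi> y\<^sub>0 - c) + a\<^sub>u $ i * M"
      by (simp add: inner_add_right inner_axis inner_real_def algebra_simps)
  qed
  have "0 < a\<^sub>t"
  proof (rule ccontr)
    assume "\<not> 0 < a\<^sub>t"
    with \<open>0 \<le> a\<^sub>t\<close> \<open>a \<noteq> 0\<close> have "a\<^sub>t = 0" "a\<^sub>u \<noteq> 0" by (auto simp: a zero_prod_def)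
    then have "inner a\<^sub>u (\<gamma> y\<^sub>0) < 0" using inner_neg_if_nonneg_nonzero a\<^sub>u slater(2) by blast
    with slack[of y\<^sub>0 0 0] slater \<open>a\<^sub>t = 0\<close> show False by simp
  qed
  have "c \<le> \<phi> y + inner ((1 / a\<^sub>t) *\<^sub>R a\<^sub>u) (\<gamma> y)" if "y \<in> Y" for y
  proof -
    have "0 \<le> (inner a\<^sub>u (\<gamma> y) + a\<^sub>t * (\<phi> y - c)) / a\<^sub>t"
      using slack[of y 0 0] that \<open>0 < a\<^sub>t\<close> by simp
    also have "\<dots> = inner ((1 / a\<^sub>t) *\<^sub>R a\<^sub>u) (\<gamma> y) + (\<phi> y - c)"
      using \<open>0 < a\<^sub>t\<close> by (simp add: field_simps)
    finally show ?thesis by simp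
  qed
  moreover have "\<forall>i. 0 \<le> ((1 / a\<^sub>t) *\<^sub>R a\<^sub>u) $ i" using \<open>0 < a\<^sub>t\<close> a\<^sub>u by simp
  ultimately show ?thesis by blast
qed

lemma slater_positive_multiplier:
  fixes \<phi> :: "'a::real_vector \<Rightarrow> real" and \<gamma> :: "'a \<Rightarrow> real^'p"
  assumes "convex Y" and "convex_on Y \<phi>" and "\<And>i. convex_on Y (\<lambda>y. \<gamma> y $ i)"
    and "y\<^sub>0 \<in> Y" and "\<And>i. \<gamma> y\<^sub>0 $ i < 0"
    and "\<And>y. y \<in> Y \<Longrightarrow> \<forall>i. \<gamma> y $ i \<le> 0 \<Longrightarrow> c < \<phi> y"
    and "bounded (\<gamma> ` Y)" and "e > 0"
  shows "\<exists>l. (\<forall>i. 0 < l $ i) \<and> (\<forall>y\<in>Y. c - e \<le> \<phi> y + inner l (\<gamma> y))"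
proof -
  obtain l where l: "\<forall>i. 0 \<le> l $ i" "\<forall>y\<in>Y. c \<le> \<phi> y + inner l (\<gamma> y)"
    using slater_multiplier[OF assms(1-6)] by blast
  obtain B where "B > 0" and B: "\<And>y. y \<in> Y \<Longrightarrow> norm (\<gamma> y) \<le> B"
    using \<open>bounded (\<gamma> ` Y)\<close> unfolding bounded_pos by blast
  define one :: "real^'p" where "one = (\<chi> i. 1)"
  define s where "s = e / (B * (norm one + 1))"
  have "norm one + 1 > 0" by (simp add: add_nonneg_pos)
  with \<open>B > 0\<close> \<open>e > 0\<close> have "s > 0" by (simp add: s_def)
  have "- e \<le> inner (s *\<^sub>R one) (\<gamma> y)" if "y \<in> Y" for y
  proof -
    have "\<bar>inner (s *\<^sub>R one) (\<gamma> y)\<bar> \<le> norm (s *\<^sub>R one) * norm (\<gamma> y)"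
      by (rule Cauchy_Schwarz_ineq2)
    also have "\<dots> \<le> norm (s *\<^sub>R one) * B" using B[OF that] by (rule mult_left_mono) simp
    also have "\<dots> = s * norm one * B" using \<open>s > 0\<close> by simp
    also have "\<dots> \<le> s * (norm one + 1) * B"
      using \<open>s > 0\<close> \<open>B > 0\<close> by (simp add: mult_right_mono)
    also have "\<dots> = e" using \<open>B > 0\<close> \<open>norm one + 1 > 0\<close> by (simp add: s_def)
    finally show ?thesis by linarith
  qed
  then have "\<forall>y\<in>Y. c - e \<le> \<phi> y + inner (l + s *\<^sub>R one) (\<gamma> y)"
    using l(2) by (fastforce simp: inner_add_left)
  moreover have "\<forall>i. 0 < (l + s *\<^sub>R one) $ i"
    using l(1) \<open>s > 0\<close> by (simp add: one_def add_nonneg_pos)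
  ultimately show ?thesis by blast
qed

text \<open>The proximal term of hmu is nonnegative and only raises the dual function; this is
  where \<mu> \<ge> 0 is used.\<close>
lemma hmu_gap_with_positive_multiplier:
  fixes f :: "'a \<Rightarrow> 'b::real_normed_vector \<Rightarrow> real" and g :: "'a \<Rightarrow> 'b \<Rightarrow> real^'p"
  assumes "compact Y" and "convex Y"
    and "convex_on UNIV (f x)" and "\<And>i. convex_on UNIV (\<lambda>y. g x y $ i)"
    and "continuous_on Y (f x)" and "continuous_on Y (g x)"
    and "y\<^sub>0 \<in> Y" and "\<And>i. g x y\<^sub>0 $ i < 0" and "\<epsilon> > 0" and "\<mu> \<ge> 0"
  shows "\<exists>y l. (\<forall>i. g x y $ i \<le> 0) \<and> (\<forall>i. 0 < l $ i) \<and> f x y - hmu \<mu> f g Y l x < \<epsilon>"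
proof -
  define S where "S = {y \<in> Y. \<forall>i. g x y $ i \<le> 0}"
  have "y\<^sub>0 \<in> S" using assms(7,8) by (auto simp: S_def less_imp_le)
  have "bdd_below (f x ` Y)"
    using assms(1,5) by (intro bounded_imp_bdd_below compact_imp_bounded compact_continuous_image)
  then have bdd: "bdd_below (f x ` S)" by (rule bdd_below_mono) (auto simp: S_def)
  define V where "V = Inf (f x ` S)"
  obtain y where "y \<in> S" and y: "f x y < V + \<epsilon> / 3"
    using cInf_lessD[of "f x ` S" "V + \<epsilon> / 3"] \<open>y\<^sub>0 \<in> S\<close> \<open>\<epsilon> > 0\<close> by (auto simp: V_def)
  have "V - \<epsilon> / 3 < f x y'" if "y' \<in> Y" "\<forall>i. g x y' $ i \<le> 0" for y'
    using cInf_lower[OF _ bdd, of "f x y'"] that \<open>\<epsilon> > 0\<close> by (force simp: S_def V_def)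
  moreover have "bounded (g x ` Y)"
    using assms(1,6) by (intro compact_imp_bounded compact_continuous_image)
  ultimately obtain l where l: "\<forall>i. 0 < l $ i" and dual: "\<forall>y\<in>Y. V - \<epsilon> / 3 - \<epsilon> / 3 \<le> f x y + inner l (g x y)"
    using slater_positive_multiplier[of Y "f x" "g x" y\<^sub>0 "V - \<epsilon> / 3" "\<epsilon> / 3"] assms(2-4,7,8) \<open>\<epsilon> > 0\<close>
    by (auto intro: convex_on_subset)
  have "V - \<epsilon> / 3 - \<epsilon> / 3 \<le> \<mu> * (norm y)\<^sup>2 + f x y + inner l (g x y)" if "y \<in> Y" for y
  proof -
    have "0 \<le> \<mu> * (norm y)\<^sup>2" using \<open>\<mu> \<ge> 0\<close> by simp
    with dual that show ?thesis by fastforce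
  qed
  then have "V - \<epsilon> / 3 - \<epsilon> / 3 \<le> hmu \<mu> f g Y l x"
    unfolding hmu_def using \<open>y\<^sub>0 \<in> Y\<close> by (intro cInf_greatest) auto
  with y \<open>y \<in> S\<close> l show ?thesis by (intro exI[of _ y] exI[of _ l]) (auto simp: S_def)
qed

section \<open>The constraints of the relaxed bilevel problem\<close>

lemma dbp_cons_projections:
  "dbp_cons G f g Y \<epsilon> \<mu> (CG j) = (\<lambda>z. G (fst z) $ j)"
  "dbp_cons G f g Y \<epsilon> \<mu> (Cg i) = (\<lambda>z. g (fst z) (fst (snd z)) $ i - \<epsilon>)"
  "dbp_cons G f g Y \<epsilon> \<mu> (Cl i) = (\<lambda>z. - (snd (snd z) $ i))"
  "dbp_cons G f g Y \<epsilon> \<mu> Cv = (\<lambda>z. f (fst z) (fst (snd z)) - hmu \<mu> f g Y (snd (snd z)) (fst z) - \<epsilon>)"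
  by (simp_all add: fun_eq_iff split_paired_All)

lemma finite_compl_range_CG: "finite (- range (CG :: 'q \<Rightarrow> ('q::finite, 'p::finite) cidx))"
proof (rule finite_subset)
  show "- range CG \<subseteq> range Cg \<union> range Cl \<union> {Cv :: ('q, 'p) cidx}"
  proof
    fix i :: "('q, 'p) cidx" assume "i \<in> - range CG"
    then show "i \<in> range Cg \<union> range Cl \<union> {Cv}" by (cases i) auto
  qed
qed simp

context
  fixes G :: "'a::euclidean_space \<Rightarrow> real^'q" and f :: "'a \<Rightarrow> 'b::euclidean_space \<Rightarrow> real"
    and g :: "'a \<Rightarrow> 'b \<Rightarrow> real^'p" and Y :: "'b set"
  assumes G_C2: "C2 G" and f_C2: "C2 (\<lambda>(x, y). f x y)" and g_C2: "C2 (\<lambda>(x, y). g x y)"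
    and f_convex: "\<forall>x. convex_on UNIV (f x)" and g_convex: "\<forall>x i. convex_on UNIV (\<lambda>y. g x y $ i)"
    and Y: "compact Y" "Y \<noteq> {}"
begin

lemma continuous_on_slices: "continuous_on S (f x)" "continuous_on S (g x)"
proof -
  have cont: "continuous_on UNIV (\<lambda>(x, y). f x y)" "continuous_on UNIV (\<lambda>(x, y). g x y)"
    using f_C2 g_C2 by (blast intro: lipschitz_on_compacts_imp_continuous_on C2_lipschitz_on_compacts)+
  have pair: "continuous_on S (\<lambda>y. (x, y))" by (intro continuous_intros)
  show "continuous_on S (f x)"
    using continuous_on_compose2[OF cont(1) pair] by simp
  show "continuous_on S (g x)"
    using continuous_on_compose2[OF cont(2) pair] by simp
qed

lemma concave_hmu: "concave_on UNIV (\<lambda>l. hmu \<mu> f g Y l x)"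
  unfolding hmu_def
proof (rule concave_on_Inf_image[OF \<open>Y \<noteq> {}\<close>])
  show "concave_on UNIV (\<lambda>l. \<mu> * (norm y)\<^sup>2 + f x y + inner l (g x y))" for y
    by (intro concave_on_add concave_on_const[THEN iffD2] convex_UNIV) (auto simp: concave_on_iff inner_add_left)
  show "bdd_below ((\<lambda>y. \<mu> * (norm y)\<^sup>2 + f x y + inner l (g x y)) ` Y)" for l
    using Y continuous_on_slices
    by (intro bounded_imp_bdd_below compact_imp_bounded compact_continuous_image continuous_intros)
      auto
qed

lemma lipschitz_on_compacts_hmu:
  "lipschitz_on_compacts (\<lambda>z :: 'a \<times> 'b \<times> (real^'p). hmu \<mu> f g Y (snd (snd z)) (fst z))"
proof -
  define \<Phi> where "\<Phi> q = \<mu> * (norm (snd q))\<^sup>2 + f (fst (fst q)) (snd q)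
      + inner (snd (snd (fst q))) (g (fst (fst q)) (snd q))" for q :: "('a \<times> 'b \<times> (real^'p)) \<times> 'b"
  have "lipschitz_on_compacts \<Phi>"
    unfolding \<Phi>_def power2_norm_eq_inner
    by (intro lipschitz_on_compacts_add lipschitz_on_compacts_bilinear[OF bounded_bilinear_mult]
        lipschitz_on_compacts_bilinear[OF bounded_bilinear_inner]
        lipschitz_on_compacts_case_prod[OF C2_lipschitz_on_compacts[OF f_C2]]
        lipschitz_on_compacts_case_prod[OF C2_lipschitz_on_compacts[OF g_C2]]
        lipschitz_on_compacts_fst lipschitz_on_compacts_snd lipschitz_on_compacts_ident
        lipschitz_on_compacts_const)
  then have "lipschitz_on_compacts (\<lambda>z. Inf ((\<lambda>y. \<Phi> (z, y)) ` Y))"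
    using Y by (rule lipschitz_on_compacts_Inf)
  then show ?thesis by (simp add: hmu_def \<Phi>_def)
qed

lemma dbp_cons_lipschitz_on_compacts: "lipschitz_on_compacts (dbp_cons G f g Y \<epsilon> \<mu> i)"
proof (cases i)
  case (CG j)
  show ?thesis
    unfolding CG dbp_cons_projections
    by (intro lipschitz_on_compacts_vec_nth lipschitz_on_compacts_compose[OF C2_lipschitz_on_compacts[OF G_C2]]
        lipschitz_on_compacts_fst lipschitz_on_compacts_ident)
next
  case (Cg k)
  show ?thesis
    unfolding Cg dbp_cons_projections
    by (intro lipschitz_on_compacts_diff lipschitz_on_compacts_vec_nth
        lipschitz_on_compacts_case_prod[OF C2_lipschitz_on_compacts[OF g_C2]]
        lipschitz_on_compacts_fst lipschitz_on_compacts_snd lipschitz_on_compacts_ident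
        lipschitz_on_compacts_const)
next
  case (Cl k)
  show ?thesis
    unfolding Cl dbp_cons_projections
    by (intro lipschitz_on_compacts_minus lipschitz_on_compacts_vec_nth
        lipschitz_on_compacts_snd lipschitz_on_compacts_ident)
next
  case Cv
  show ?thesis
    unfolding Cv dbp_cons_projections
    by (intro lipschitz_on_compacts_diff lipschitz_on_compacts_hmu
        lipschitz_on_compacts_case_prod[OF C2_lipschitz_on_compacts[OF f_C2]]
        lipschitz_on_compacts_fst lipschitz_on_compacts_snd lipschitz_on_compacts_ident
        lipschitz_on_compacts_const)
qed

lemma dbp_cons_convex_in_lower_variables:
  assumes "i \<notin> range CG"
  shows "convex_on UNIV (\<lambda>w. dbp_cons G f g Y \<epsilon> \<mu> i (x, w))"
proof (cases i)
  case (Cg k)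
  have "convex_on UNIV (\<lambda>y. g x y $ k)" using g_convex by blast
  then have "convex_on UNIV (\<lambda>w :: 'b \<times> (real^'p). g x (fst w) $ k)"
    by (rule convex_on_compose_linear) (rule bounded_linear.linear[OF bounded_linear_fst])
  then have "convex_on UNIV (\<lambda>w :: 'b \<times> (real^'p). g x (fst w) $ k - \<epsilon>)"
    by (rule convex_on_diff) (simp add: concave_on_const)
  then show ?thesis by (simp add: Cg dbp_cons_projections)
next
  case (Cl k)
  then show ?thesis unfolding dbp_cons_projections by (auto simp: convex_on_def algebra_simps)
next
  case Cv
  have "convex_on UNIV (f x)" using f_convex by blast
  then have "convex_on UNIV (\<lambda>w :: 'b \<times> (real^'p). f x (fst w))"
    by (rule convex_on_compose_linear) (rule bounded_linear.linear[OF bounded_linear_fst])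
  moreover have "concave_on UNIV (\<lambda>w :: 'b \<times> (real^'p). hmu \<mu> f g Y (snd w) x)"
    by (rule concave_on_compose_linear[OF concave_hmu bounded_linear.linear[OF bounded_linear_snd]])
  ultimately have "convex_on UNIV (\<lambda>w. f x (fst w) - hmu \<mu> f g Y (snd w) x)"
    by (rule convex_on_diff)
  then have "convex_on UNIV (\<lambda>w. f x (fst w) - hmu \<mu> f g Y (snd w) x - \<epsilon>)"
    by (rule convex_on_diff) (simp add: concave_on_const)
  then show ?thesis by (simp add: Cv dbp_cons_projections)
qed (use assms in auto)

lemma dbp_cons_CG_descent:
  assumes "\<forall>v\<in>limiting_subdiff (\<lambda>x. G x $ j) x\<^sub>0. inner v dx < 0" and "t > 0"
  shows "uniform_descent_direction (dbp_cons G f g Y \<epsilon> \<mu> (CG j)) (x\<^sub>0, w\<^sub>0) (t *\<^sub>R dx, dw)"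
proof -
  obtain D where D: "\<And>z. (G has_derivative blinfun_apply (D z)) (at z)" "continuous_on UNIV D"
    using C2_imp_continuous_derivative[OF G_C2] by blast
  have "((\<lambda>x. G x $ j) has_derivative (\<lambda>w. D x\<^sub>0 w $ j)) (at x\<^sub>0)"
    using bounded_linear.has_derivative[OF bounded_linear_vec_nth D(1)] by simp
  then obtain v where "v \<in> limiting_subdiff (\<lambda>x. G x $ j) x\<^sub>0" and "\<And>w. D x\<^sub>0 w $ j = inner v w"
    using has_derivative_gradient_in_limiting_subdiff by blast
  then have "D x\<^sub>0 (t *\<^sub>R dx) $ j < 0"
    using assms by (simp add: blinfun.scaleR_right mult_pos_neg)
  then have "uniform_descent_direction (\<lambda>x. G x $ j) x\<^sub>0 (t *\<^sub>R dx)"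
    using D by (intro uniform_descent_direction_of_derivative) (auto simp: continuous_on_eq_continuous_at)
  then show ?thesis unfolding dbp_cons_projections by (rule uniform_descent_direction_fst)
qed

text \<open>The MFCQ direction is (t dx, dw) for small t > 0: dx serves the upper-level
  constraints, and w0 + dw is a point where all remaining constraints are strictly negative.\<close>
lemma MFCQ_dbp_cons:
  assumes upper: "\<forall>j. G x\<^sub>0 $ j = 0 \<longrightarrow> (\<forall>v\<in>limiting_subdiff (\<lambda>x. G x $ j) x\<^sub>0. inner v dx < 0)"
    and lower: "\<forall>i. i \<notin> range CG \<longrightarrow> dbp_cons G f g Y \<epsilon> \<mu> i (x\<^sub>0, w\<^sub>0 + dw) < 0"
  shows "MFCQ (dbp_cons G f g Y \<epsilon> \<mu>) (x\<^sub>0, w\<^sub>0)"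
proof -
  let ?c = "dbp_cons G f g Y \<epsilon> \<mu>"
  have "\<forall>\<^sub>F t in at_right 0. \<forall>i\<in>- range CG.
      ?c i (x\<^sub>0, w\<^sub>0) = 0 \<longrightarrow> uniform_descent_direction (?c i) (x\<^sub>0, w\<^sub>0) (t *\<^sub>R dx, dw)"
  proof (rule eventually_ball_finite[OF finite_compl_range_CG], rule ballI)
    fix i :: "('q, 'p) cidx" assume "i \<in> - range CG"
    show "\<forall>\<^sub>F t in at_right 0. ?c i (x\<^sub>0, w\<^sub>0) = 0 \<longrightarrow> uniform_descent_direction (?c i) (x\<^sub>0, w\<^sub>0) (t *\<^sub>R dx, dw)"
    proof (cases "?c i (x\<^sub>0, w\<^sub>0) = 0")
      case True
      with lower \<open>i \<in> - range CG\<close> have "?c i (x\<^sub>0, w\<^sub>0 + dw) < ?c i (x\<^sub>0, w\<^sub>0)" by simp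
      with \<open>i \<in> - range CG\<close> show ?thesis
        by (auto intro: convex_eventually_uniform_descent_direction dbp_cons_convex_in_lower_variables
            dbp_cons_lipschitz_on_compacts elim: eventually_mono)
    qed simp
  qed
  then obtain b where "b > 0" and b: "\<And>t. 0 < t \<Longrightarrow> t < b \<Longrightarrow> \<forall>i\<in>- range CG.
      ?c i (x\<^sub>0, w\<^sub>0) = 0 \<longrightarrow> uniform_descent_direction (?c i) (x\<^sub>0, w\<^sub>0) (t *\<^sub>R dx, dw)"
    unfolding eventually_at_right_field by auto
  have "uniform_descent_direction (?c i) (x\<^sub>0, w\<^sub>0) ((b / 2) *\<^sub>R dx, dw)" if "?c i (x\<^sub>0, w\<^sub>0) = 0" for i
  proof (cases "i \<in> range CG")
    case True
    then obtain j where "i = CG j" by blast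
    with that have "G x\<^sub>0 $ j = 0" by (simp add: dbp_cons_projections)
    with upper \<open>b > 0\<close> show ?thesis unfolding \<open>i = CG j\<close> by (intro dbp_cons_CG_descent) auto
  next
    case False
    with b[of "b / 2"] that \<open>b > 0\<close> show ?thesis by auto
  qed
  then show ?thesis unfolding MFCQ_def by (blast intro: limiting_subdiff_inner_neg)
qed

end

theorem theorem3:
  fixes F f :: "real^'n \<Rightarrow> real^'m \<Rightarrow> real"
    and g :: "real^'n \<Rightarrow> real^'m \<Rightarrow> real^'p"
    and G :: "real^'n \<Rightarrow> real^'q"
    and X :: "(real^'n) set" and Y :: "(real^'m) set"
    and \<epsilon> \<mu> :: real
  assumes X_def: "X = {x. \<forall>j. G x $ j \<le> 0}"
    and A1_convf: "\<forall>x. convex_on UNIV (f x)"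
    and A1_convg: "\<forall>x i. convex_on UNIV (\<lambda>y. g x y $ i)"
    and A1_smooth_f: "C2 (\<lambda>(x,y). f x y)"
    and A1_smooth_g: "C2 (\<lambda>(x,y). g x y)"
    and A2_compact: "compact Y" and A2_convex: "convex Y"
    and A2_int: "{y. \<exists>x\<in>X. \<forall>i. g x y $ i \<le> 0} \<subseteq> interior Y"
    and A3_F: "C2 (\<lambda>(x,y). F x y)"
    and A3_G: "C2 G"
    and R1: "\<forall>x\<in>X. \<exists>y. \<forall>i. g x y $ i < 0"
    and R2_compact: "compact X" and R2_ne: "X \<noteq> {}"
    and R2_MFCQ: "\<forall>x\<in>X. MFCQ (\<lambda>j x. G x $ j) x"
    and eps: "\<epsilon> > 0" and mu: "\<mu> \<ge> 0"
  shows "\<forall>z\<in>dbp_set G f g Y \<epsilon> \<mu>. MFCQ (dbp_cons G f g Y \<epsilon> \<mu>) z"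
proof
  fix z assume "z \<in> dbp_set G f g Y \<epsilon> \<mu>"
  then obtain x\<^sub>0 w\<^sub>0 where z: "z = (x\<^sub>0, w\<^sub>0)" and "\<forall>i. dbp_cons G f g Y \<epsilon> \<mu> i (x\<^sub>0, w\<^sub>0) \<le> 0"
    by (cases z) (auto simp: dbp_set_def)
  then have "x\<^sub>0 \<in> X" unfolding X_def by (auto simp: dbp_cons_projections dest: spec[of _ "CG _"])
  then obtain dx where dx: "\<forall>j. G x\<^sub>0 $ j = 0 \<longrightarrow> (\<forall>v\<in>limiting_subdiff (\<lambda>x. G x $ j) x\<^sub>0. inner v dx < 0)"
    using R2_MFCQ unfolding MFCQ_def by blast
  obtain y\<^sub>0 where y\<^sub>0: "\<forall>i. g x\<^sub>0 y\<^sub>0 $ i < 0" using R1 \<open>x\<^sub>0 \<in> X\<close> by blast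
  with \<open>x\<^sub>0 \<in> X\<close> have "y\<^sub>0 \<in> {y. \<exists>x\<in>X. \<forall>i. g x y $ i \<le> 0}" by (auto intro: less_imp_le)
  then have "y\<^sub>0 \<in> Y" using A2_int interior_subset by blast
  then have "Y \<noteq> {}" by blast
  note setting = A3_G A1_smooth_f A1_smooth_g A1_convf A1_convg A2_compact \<open>Y \<noteq> {}\<close>
  obtain y l where yl: "\<forall>i. g x\<^sub>0 y $ i \<le> 0" "\<forall>i. 0 < l $ i" "f x\<^sub>0 y - hmu \<mu> f g Y l x\<^sub>0 < \<epsilon>"
    using hmu_gap_with_positive_multiplier[where f = f and g = g and x = x\<^sub>0,
        OF A2_compact A2_convex A1_convf[rule_format] A1_convg[rule_format]
        continuous_on_slices[OF setting, where S = Y and x = x\<^sub>0] \<open>y\<^sub>0 \<in> Y\<close> y\<^sub>0[rule_format] eps mu]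
    by blast
  have "\<forall>i. i \<notin> range CG \<longrightarrow> dbp_cons G f g Y \<epsilon> \<mu> i (x\<^sub>0, w\<^sub>0 + ((y, l) - w\<^sub>0)) < 0"
  proof (intro allI impI)
    fix i :: "('q, 'p) cidx" assume "i \<notin> range CG"
    with yl eps show "dbp_cons G f g Y \<epsilon> \<mu> i (x\<^sub>0, w\<^sub>0 + ((y, l) - w\<^sub>0)) < 0"
      by (cases i) (auto simp: dbp_cons_projections intro: le_less_trans[OF _ eps])
  qed
  with dx show "MFCQ (dbp_cons G f g Y \<epsilon> \<mu>) z" unfolding z by (rule MFCQ_dbp_cons[OF setting])
qed

end
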